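(* Let $m\ge2$, let $P_1,\dots,P_m$ be $n\times n$ orthogonal projection matrices, and let $M$ be the $mn\times mn$ block matrix (blocks of size $n\times n$, indexed by $i,j\in\{1,\dots,m\}$) with diagonal blocks $M_{ii}=I-\tfrac12P_i$, blocks $M_{i,i-1}=\tfrac12P_i$ (where index $0$ means $m$), and all other blocks zero; i.e. $M$ is the matrix of the map $(x_1,\dots,x_m)\mapsto\big(x_i-\tfrac12P_i(x_i-x_{i-1})\big)_{i=1}^m$ with $x_0:=x_m$. Then every eigenvalue $\lambda\ne1$ of $M$ satisfies $|\lambda|<1$.
   Context: An orthogonal projection matrix is a real symmetric matrix $P$ with $P^2=P$. *)

theory Defs
  imports Complex_Main "Jordan_Normal_Form.Char_Poly"
begin

definition orth_proj_mat :: "nat \<Rightarrow> real mat \<Rightarrow> bool" where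
  "orth_proj_mat n P \<longleftrightarrow> P \<in> carrier_mat n n \<and> transpose_mat P = P \<and> P * P = P"

text \<open>The (m n) x (m n) block matrix with blocks indexed by i, j in {0..m-1} (0-based):
  diagonal blocks I - P_i / 2, blocks (i, i-1 mod m) equal to P_i / 2, all others zero.\<close>
definition cyc_block_mat :: "nat \<Rightarrow> nat \<Rightarrow> (nat \<Rightarrow> real mat) \<Rightarrow> real mat" where
  "cyc_block_mat m n P = mat (m * n) (m * n) (\<lambda>(r, c).
     (let i = r div n; a = r mod n; j = c div n; b = c mod n in
      if j = i then (if a = b then 1 else 0) - (1/2) * (P i $$ (a, b))
      else if j = (i + m - 1) mod m then (1/2) * (P i $$ (a, b))
      else 0))"

end

theory Submission
  imports Defs
begin

text \<open>Write an eigenvector as blocks x_1, ..., x_m, so that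
  \<lambda> x_i = x_i - (1/2) P_i (x_i - x_{i-1}). If \<lambda> \<noteq> 1 then x_i is a multiple of
  P_i (x_i - x_{i-1}), hence P_i x_i = x_i, and the equation becomes
  (1 - 2\<lambda>) x_i = - P_i x_{i-1}. Since P_i does not increase the norm,
  |1 - 2\<lambda>| \<parallel>x_i\<parallel> \<le> \<parallel>x_{i-1}\<parallel>; summing the squares cyclically gives |1 - 2\<lambda>| \<le> 1.
  So \<lambda> lies in the closed disk of radius 1/2 about 1/2, which meets the unit
  circle only in 1.\<close>

definition mat_app :: "nat \<Rightarrow> real mat \<Rightarrow> (nat \<Rightarrow> 'a::real_algebra_1) \<Rightarrow> nat \<Rightarrow> 'a" where
  "mat_app n Q z a = (\<Sum>b<n. of_real (Q $$ (a, b)) * z b)"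

lemma orth_proj_mat_sym:
  assumes "orth_proj_mat n Q" "a < n" "b < n"
  shows "Q $$ (a, b) = Q $$ (b, a)"
proof -
  have "Q \<in> carrier_mat n n" "transpose_mat Q = Q"
    using assms(1) unfolding orth_proj_mat_def by auto
  then show ?thesis using assms(2,3) by (metis index_transpose_mat(1) carrier_matD)
qed

lemma orth_proj_mat_idem_sum:
  assumes "orth_proj_mat n Q" "a < n" "b < n"
  shows "(\<Sum>c<n. Q $$ (a, c) * Q $$ (c, b)) = Q $$ (a, b)"
proof -
  have Q: "Q \<in> carrier_mat n n" "Q * Q = Q"
    using assms(1) unfolding orth_proj_mat_def by auto
  have "(Q * Q) $$ (a, b) = (\<Sum>c<n. Q $$ (a, c) * Q $$ (c, b))"
    using Q(1) assms(2,3) by (simp add: scalar_prod_def atLeast0LessThan)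
  then show ?thesis using Q(2) by simp
qed

lemma mat_app_cong: "(\<And>b. b < n \<Longrightarrow> z b = w b) \<Longrightarrow> mat_app n Q z a = mat_app n Q w a"
  unfolding mat_app_def by (rule sum.cong) auto

lemma mat_app_scale:
  fixes z :: "nat \<Rightarrow> 'a::{real_algebra_1, comm_ring_1}"
  shows "mat_app n Q (\<lambda>b. c * z b) a = c * mat_app n Q z a"
  unfolding mat_app_def by (simp add: sum_distrib_left algebra_simps)

lemma mat_app_diff: "mat_app n Q (\<lambda>b. z b - w b) a = mat_app n Q z a - mat_app n Q w a"
  unfolding mat_app_def by (simp add: sum_subtractf algebra_simps)

lemma orth_proj_mat_app_idem:
  assumes "orth_proj_mat n Q" "a < n"
  shows "mat_app n Q (mat_app n Q z) a = mat_app n Q z a"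
proof -
  have "mat_app n Q (mat_app n Q z) a
      = (\<Sum>b<n. \<Sum>c<n. of_real (Q $$ (a, b) * Q $$ (b, c)) * z c)"
    unfolding mat_app_def by (simp add: sum_distrib_left mult.assoc)
  also have "\<dots> = (\<Sum>c<n. of_real (\<Sum>b<n. Q $$ (a, b) * Q $$ (b, c)) * z c)"
    by (subst sum.swap) (simp add: sum_distrib_right)
  also have "\<dots> = mat_app n Q z a"
    unfolding mat_app_def using orth_proj_mat_idem_sum[OF assms] by simp
  finally show ?thesis .
qed

lemma Re_mat_app: "Re (mat_app n Q z a) = mat_app n Q (\<lambda>b. Re (z b)) a"
  unfolding mat_app_def by (simp add: Re_sum)

lemma Im_mat_app: "Im (mat_app n Q z a) = mat_app n Q (\<lambda>b. Im (z b)) a"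
  unfolding mat_app_def by (simp add: Im_sum)

lemma orth_proj_mat_contraction_real:
  fixes u :: "nat \<Rightarrow> real"
  assumes "orth_proj_mat n Q"
  shows "(\<Sum>a<n. (mat_app n Q u a)\<^sup>2) \<le> (\<Sum>a<n. (u a)\<^sup>2)"
proof -
  let ?w = "mat_app n Q u"
  have "(\<Sum>a<n. ?w a * ?w a) = (\<Sum>a<n. \<Sum>b<n. Q $$ (a, b) * u b * ?w a)"
    by (simp add: mat_app_def sum_distrib_right)
  also have "\<dots> = (\<Sum>a<n. \<Sum>b<n. Q $$ (b, a) * u b * ?w a)"
    by (intro sum.cong refl) (simp add: orth_proj_mat_sym[OF assms])
  also have "\<dots> = (\<Sum>b<n. u b * mat_app n Q ?w b)"
    by (subst sum.swap) (simp add: mat_app_def sum_distrib_left algebra_simps)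
  also have "\<dots> = (\<Sum>b<n. u b * ?w b)"
    by (intro sum.cong refl) (simp add: orth_proj_mat_app_idem[OF assms])
  finally have inner: "(\<Sum>a<n. ?w a * ?w a) = (\<Sum>a<n. u a * ?w a)" .
  have "0 \<le> (\<Sum>a<n. (u a - ?w a)\<^sup>2)" by (simp add: sum_nonneg)
  also have "\<dots> = (\<Sum>a<n. (u a)\<^sup>2) - 2 * (\<Sum>a<n. u a * ?w a) + (\<Sum>a<n. ?w a * ?w a)"
    by (simp add: power2_eq_square algebra_simps sum.distrib sum_subtractf sum_distrib_left)
  finally show ?thesis using inner by (simp add: power2_eq_square)
qed

lemma orth_proj_mat_contraction:
  fixes z :: "nat \<Rightarrow> complex"
  assumes "orth_proj_mat n Q"
  shows "(\<Sum>a<n. (cmod (mat_app n Q z a))\<^sup>2) \<le> (\<Sum>a<n. (cmod (z a))\<^sup>2)"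
proof -
  have "(\<Sum>a<n. (cmod (mat_app n Q z a))\<^sup>2)
      = (\<Sum>a<n. (mat_app n Q (\<lambda>b. Re (z b)) a)\<^sup>2) + (\<Sum>a<n. (mat_app n Q (\<lambda>b. Im (z b)) a)\<^sup>2)"
    by (simp add: cmod_power2 Re_mat_app Im_mat_app sum.distrib)
  also have "\<dots> \<le> (\<Sum>a<n. (Re (z a))\<^sup>2) + (\<Sum>a<n. (Im (z a))\<^sup>2)"
    using orth_proj_mat_contraction_real[OF assms] by (intro add_mono)
  also have "\<dots> = (\<Sum>a<n. (cmod (z a))\<^sup>2)" by (simp add: cmod_power2 sum.distrib)
  finally show ?thesis .
qed

lemma eigen_block_eq_contraction:
  fixes x y :: "nat \<Rightarrow> complex"
  assumes Q: "orth_proj_mat n Q" and lam: "lam \<noteq> 1"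
    and eq: "\<And>a. a < n \<Longrightarrow> lam * x a = x a - 1/2 * mat_app n Q x a + 1/2 * mat_app n Q y a"
  shows "(cmod (1 - 2 * lam))\<^sup>2 * (\<Sum>a<n. (cmod (x a))\<^sup>2) \<le> (\<Sum>a<n. (cmod (y a))\<^sup>2)"
proof -
  define c where "c = 1 / (2 * (1 - lam))"
  have x_in_range: "x a = c * mat_app n Q (\<lambda>b. x b - y b) a" if "a < n" for a
  proof -
    have "(1 - lam) * x a = x a - lam * x a" by (simp add: algebra_simps)
    also have "\<dots> = 1/2 * (mat_app n Q x a - mat_app n Q y a)"
      by (subst eq[OF that]) (simp add: algebra_simps)
    finally have "(1 - lam) * x a = 1/2 * mat_app n Q (\<lambda>b. x b - y b) a"
      by (simp add: mat_app_diff)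
    then show ?thesis using lam by (simp add: c_def field_simps)
  qed
  have fixed: "mat_app n Q x a = x a" if a: "a < n" for a
  proof -
    have "mat_app n Q x a = mat_app n Q (\<lambda>b. c * mat_app n Q (\<lambda>b. x b - y b) b) a"
      by (rule mat_app_cong) (simp add: x_in_range)
    also have "\<dots> = x a"
      by (simp add: mat_app_scale orth_proj_mat_app_idem[OF Q a] x_in_range[OF a])
    finally show ?thesis .
  qed
  have "(1 - 2 * lam) * x a = - mat_app n Q y a" if "a < n" for a
  proof -
    have "(1 - 2 * lam) * x a = x a - 2 * (lam * x a)" by (simp add: algebra_simps)
    also have "\<dots> = - mat_app n Q y a"
      by (subst eq[OF that]) (simp add: fixed[OF that] algebra_simps)
    finally show ?thesis .
  qed
  then have "(cmod (1 - 2 * lam))\<^sup>2 * (\<Sum>a<n. (cmod (x a))\<^sup>2) = (\<Sum>a<n. (cmod (mat_app n Q y a))\<^sup>2)"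
    unfolding sum_distrib_left power_mult_distrib[symmetric] norm_mult[symmetric]
    by (intro sum.cong refl) simp
  also have "\<dots> \<le> (\<Sum>a<n. (cmod (y a))\<^sup>2)"
    by (rule orth_proj_mat_contraction[OF Q])
  finally show ?thesis .
qed

lemma cmod_less_1_if_cmod_1_minus_2_le_1:
  fixes lam :: complex
  assumes "cmod (1 - 2 * lam) \<le> 1" and "lam \<noteq> 1"
  shows "cmod lam < 1"
proof -
  have "(cmod (1 - 2 * lam))\<^sup>2 \<le> 1" using assms(1) by (simp add: power_le_one)
  then have "(Re (1 - 2 * lam))\<^sup>2 + (Im (1 - 2 * lam))\<^sup>2 \<le> 1"
    by (simp only: cmod_power2)
  then have disk: "(cmod lam)\<^sup>2 \<le> Re lam"
    unfolding cmod_power2 by (simp add: power2_eq_square algebra_simps)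
  have re_le: "Re lam \<le> cmod lam" by (rule complex_Re_le_cmod)
  show ?thesis
  proof (rule ccontr)
    assume "\<not> cmod lam < 1"
    then have "cmod lam * cmod lam \<le> 1 * cmod lam"
      using disk re_le by (simp add: power2_eq_square)
    then have "cmod lam \<le> 1"
      by (rule mult_right_le_imp_le) (use \<open>\<not> cmod lam < 1\<close> in auto)
    with \<open>\<not> cmod lam < 1\<close> disk re_le have "cmod lam = 1" "Re lam = 1" by auto
    then have "Im lam = 0" using cmod_power2[of lam] by simp
    with \<open>Re lam = 1\<close> assms(2) show False by (simp add: complex_eq_iff)
  qed
qed

lemma sum_cyclic_pred:
  fixes m :: nat
  assumes "0 < m"
  shows "(\<Sum>i<m. f ((i + m - 1) mod m)) = (\<Sum>i<m. f i)"
proof -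
  obtain k where m: "m = Suc k" using assms by (cases m) auto
  have "(\<Sum>i<m. f ((i + m - 1) mod m)) = f k + (\<Sum>i<k. f ((Suc i + k) mod Suc k))"
    unfolding m sum.lessThan_Suc_shift by simp
  also have "\<dots> = f k + (\<Sum>i<k. f i)"
    by (intro arg_cong2[where f = "(+)"] sum.cong refl)
      (metis add_Suc_shift add.commute mod_add_self2 mod_less less_SucI lessThan_iff)
  also have "\<dots> = (\<Sum>i<m. f i)"
    unfolding m by (simp add: add.commute)
  finally show ?thesis .
qed

lemma cyclic_contraction_factor_le_1:
  fixes N :: "nat \<Rightarrow> real"
  assumes contr: "\<And>i. i < m \<Longrightarrow> K * N i \<le> N ((i + m - 1) mod m)"
    and nonneg: "\<And>i. 0 \<le> N i" and "i0 < m" "0 < N i0"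
  shows "K \<le> 1"
proof -
  have "K * (\<Sum>i<m. N i) \<le> (\<Sum>i<m. N ((i + m - 1) mod m))"
    unfolding sum_distrib_left by (intro sum_mono contr) simp
  also have "\<dots> = (\<Sum>i<m. N i)"
    using \<open>i0 < m\<close> by (intro sum_cyclic_pred) simp
  finally have "K * (\<Sum>i<m. N i) \<le> 1 * (\<Sum>i<m. N i)" by simp
  moreover have "0 < (\<Sum>i<m. N i)"
    using assms(3,4) nonneg by (intro sum_pos2[of _ i0]) auto
  ultimately show ?thesis by (simp only: mult_le_cancel_right)
qed

lemma block_index_less:
  fixes i a m n :: nat
  assumes "i < m" "a < n"
  shows "i * n + a < m * n"
proof -
  have "i * n + a < (i + 1) * n" using assms(2) by simp
  also have "\<dots> \<le> m * n" using assms(1) by (intro mult_right_mono) auto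
  finally show ?thesis .
qed

lemma sum_lessThan_mult_blocks:
  fixes f :: "nat \<Rightarrow> 'a::comm_monoid_add"
  shows "(\<Sum>c<m * n. f c) = (\<Sum>j<m. \<Sum>b<n. f (j * n + b))"
proof -
  have "(\<Sum>c<m * n. f c) = (\<Sum>j<m. sum f {j * n..<j * n + n})"
    using sum.nat_group[of f n m] by simp
  also have "\<dots> = (\<Sum>j<m. \<Sum>b<n. f (j * n + b))"
  proof (rule sum.cong)
    show "sum f {j * n..<j * n + n} = (\<Sum>b<n. f (j * n + b))" for j
      using sum.shift_bounds_nat_ivl[of f 0 "j * n" n] by (simp add: atLeast0LessThan add.commute)
  qed simp
  finally show ?thesis .
qed

lemma cyclic_pred_neq:
  fixes m i :: nat
  assumes "2 \<le> m" "i < m"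
  shows "(i + m - 1) mod m \<noteq> i"
proof (cases i)
  case 0
  then show ?thesis using assms(1) by simp
next
  case (Suc k)
  then have "(i + m - 1) mod m = k" using assms(2) by simp
  then show ?thesis using Suc by simp
qed

lemma cyc_block_mat_entry:
  assumes "i < m" "j < m" "a < n" "b < n"
  shows "cyc_block_mat m n P $$ (i * n + a, j * n + b) =
    (if j = i then (if a = b then 1 else 0) - 1/2 * P i $$ (a, b)
     else if j = (i + m - 1) mod m then 1/2 * P i $$ (a, b) else 0)"
  using assms block_index_less[OF assms(1,3)] block_index_less[OF assms(2,4)]
  by (simp add: cyc_block_mat_def Let_def)

lemma cyc_block_mat_mult_vec:
  fixes v :: "complex vec"
  assumes m: "2 \<le> m" and v: "v \<in> carrier_vec (m * n)" and i: "i < m" and a: "a < n"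
  defines "x \<equiv> \<lambda>j b. v $ (j * n + b)"
  shows "(map_mat complex_of_real (cyc_block_mat m n P) *\<^sub>v v) $ (i * n + a)
    = x i a - 1/2 * mat_app n (P i) (x i) a + 1/2 * mat_app n (P i) (x ((i + m - 1) mod m)) a"
proof -
  define p where "p = (i + m - 1) mod m"
  have p: "p \<noteq> i" "p < m" using cyclic_pred_neq[OF m i] m by (auto simp: p_def)
  have entry: "complex_of_real (cyc_block_mat m n P $$ (i * n + a, j * n + b)) =
      (if j = i then of_real ((if a = b then 1 else 0) - 1/2 * P i $$ (a, b)) else 0)
      + (if j = p then of_real (1/2 * P i $$ (a, b)) else 0)"
    if "j < m" "b < n" for j b
    using cyc_block_mat_entry[OF i that(1) a that(2), of P] p by (auto simp: p_def)
  have "(map_mat complex_of_real (cyc_block_mat m n P) *\<^sub>v v) $ (i * n + a)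
      = (\<Sum>j<m. \<Sum>b<n. of_real (cyc_block_mat m n P $$ (i * n + a, j * n + b)) * x j b)"
  proof -
    have "cyc_block_mat m n P \<in> carrier_mat (m * n) (m * n)"
      by (simp add: cyc_block_mat_def)
    then have "(map_mat complex_of_real (cyc_block_mat m n P) *\<^sub>v v) $ (i * n + a)
        = (\<Sum>c<m * n. of_real (cyc_block_mat m n P $$ (i * n + a, c)) * v $ c)"
      using v block_index_less[OF i a] by (simp add: scalar_prod_def atLeast0LessThan)
    then show ?thesis unfolding sum_lessThan_mult_blocks x_def .
  qed
  also have "\<dots> = (\<Sum>j<m. (if j = i then x i a - 1/2 * mat_app n (P i) (x i) a else 0)
      + (if j = p then 1/2 * mat_app n (P i) (x p) a else 0))"
  proof (rule sum.cong[OF refl])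
    fix j assume "j \<in> {..<m}"
    then have j: "j < m" by simp
    have "(\<Sum>b<n. of_real (cyc_block_mat m n P $$ (i * n + a, j * n + b)) * x j b)
      = (\<Sum>b<n. (if j = i then (if a = b then x i b else 0) - 1/2 * (of_real (P i $$ (a, b)) * x i b) else 0)
         + (if j = p then 1/2 * (of_real (P i $$ (a, b)) * x p b) else 0))"
      by (intro sum.cong refl) (simp add: entry[OF j], simp add: algebra_simps)
    then show "(\<Sum>b<n. of_real (cyc_block_mat m n P $$ (i * n + a, j * n + b)) * x j b)
      = (if j = i then x i a - 1/2 * mat_app n (P i) (x i) a else 0)
        + (if j = p then 1/2 * mat_app n (P i) (x p) a else 0)"
      using a by (simp add: sum.distrib sum_subtractf mat_app_def sum_distrib_left)
  qed
  also have "\<dots> = x i a - 1/2 * mat_app n (P i) (x i) a + 1/2 * mat_app n (P i) (x p) a"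
    using i p by (simp add: sum.distrib)
  finally show ?thesis unfolding p_def .
qed

theorem lemma10:
  fixes m n :: nat and P :: "nat \<Rightarrow> real mat" and lam :: complex
  assumes "m \<ge> 2"
    and "\<And>i. i < m \<Longrightarrow> orth_proj_mat n (P i)"
    and "eigenvalue (map_mat complex_of_real (cyc_block_mat m n P)) lam"
    and "lam \<noteq> 1"
  shows "cmod lam < 1"
proof -
  let ?A = "map_mat complex_of_real (cyc_block_mat m n P)"
  have "?A \<in> carrier_mat (m * n) (m * n)" by (simp add: cyc_block_mat_def)
  then obtain v where v: "v \<in> carrier_vec (m * n)" "v \<noteq> 0\<^sub>v (m * n)" "?A *\<^sub>v v = lam \<cdot>\<^sub>v v"
    using assms(3) unfolding eigenvalue_def eigenvector_def by auto
  then obtain r where r: "r < m * n" "v $ r \<noteq> 0"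
    by (metis eq_vecI carrier_vecD index_zero_vec)
  define x where "x = (\<lambda>j b. v $ (j * n + b))"
  define N where "N j = (\<Sum>b<n. (cmod (x j b))\<^sup>2)" for j
  have block_eq: "lam * x i a = x i a - 1/2 * mat_app n (P i) (x i) a
      + 1/2 * mat_app n (P i) (x ((i + m - 1) mod m)) a" if "i < m" "a < n" for i a
    using cyc_block_mat_mult_vec[OF assms(1) v(1) that, of P] v block_index_less[OF that]
    by (simp add: x_def)
  have "(cmod (1 - 2 * lam))\<^sup>2 \<le> 1"
  proof (rule cyclic_contraction_factor_le_1)
    show "(cmod (1 - 2 * lam))\<^sup>2 * N i \<le> N ((i + m - 1) mod m)" if "i < m" for i
      unfolding N_def
      by (rule eigen_block_eq_contraction[OF assms(2)[OF that] assms(4) block_eq[OF that]])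
    show "0 \<le> N j" for j by (simp add: N_def sum_nonneg)
    have "0 < n" using r(1) by (cases n) auto
    then show "r div n < m" using r(1) by (simp add: less_mult_imp_div_less)
    have "r mod n < n" using \<open>0 < n\<close> by simp
    have "x (r div n) (r mod n) \<noteq> 0" using r(2) by (simp add: x_def mult.commute)
    then show "0 < N (r div n)"
      unfolding N_def using \<open>r mod n < n\<close> by (intro sum_pos2[of _ "r mod n"]) auto
  qed
  then show ?thesis
    using assms(4) by (intro cmod_less_1_if_cmod_1_minus_2_le_1) (simp_all add: power_le_one_iff)
qed

end
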